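(* Let $m$ be a non-negative integer, let $A$ and $D$ be two $k$-tuples of elements of $\mathbb{Z}/m\mathbb{Z}$, and let $p_1,p_2$ be positive integers with $k\mid p_1$. Then the orbit of $S=\mathrm{IAP}(A,D)$ is $(p_1,p_2)$-periodic if and only if $\pi_{m/\gcd(p_1/k,m)}(D)=0$ and the $1\times 2k$ block row $(A\mid D)$ lies in $\mathrm{Lker}_m\,P$, where $$P=\begin{pmatrix} W & 0_k\\ T_k^{(p_2)} & W\end{pmatrix},\qquad W=C_k^{(p_2)}+(-1)^{p_2+1}I_k .$$
   Context: $\mathbb{Z}/0\mathbb{Z}=\mathbb{Z}$. For $d\mid m$, $\pi_d$ is reduction from $\mathbb{Z}/m\mathbb{Z}$ to $\mathbb{Z}/d\mathbb{Z}$, applied entrywise. For $k$-tuples $A=(a_0,\dots,a_{k-1})$, $D=(d_0,\dots,d_{k-1})$, $\mathrm{IAP}(A,D)$ is the sequence $(u_j)_{j\in\mathbb{Z}}$ with $u_{qk+r}=a_r+qd_r$ ($q\in\mathbb{Z}$, $0\le r\le k-1$). The orbit of a sequence $(u_j)_{j\in\mathbb{Z}}$ is $(a_{i,j})_{(i,j)\in\mathbb{N}\times\mathbb{Z}}$ with $a_{0,j}=u_j$, $a_{i,j}=-a_{i-1,j}-a_{i-1,j+1}$ for $i\ge1$; it is $(p,q)$-periodic if $a_{i+q,j}=a_{i,j+p}=a_{i,j}$ for all $(i,j)$. $C_k^{(i)}$ is the $k\times k$ integer matrix $\big(\sum_{\alpha\in\mathbb{Z}}\binom{i}{\alpha k+r-s}\big)_{1\le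 r,s\le k}$ and $T_k^{(i)}=\big(\sum_{\alpha\in\mathbb{Z}}\alpha\binom{i}{\alpha k+r-s}\big)_{1\le r,s\le k}$, where $\binom{a}{b}=0$ if $b<0$ or $b>a$. For an $n_1\times n_2$ integer matrix $M$, $\mathrm{Lker}_m M=\{X\in(\mathbb{Z}/m\mathbb{Z})^{n_1}: X\,\pi_m(M)=0\}$ (row vectors). *)

theory Defs
  imports "HOL-Number_Theory.Number_Theory"
begin

text \<open>Elements of Z/mZ are represented by integer representatives; equality in Z/mZ
  is congruence modulo m (for m = 0 this is equality in Z).
  k-tuples are functions nat => int, only indices 0..k-1 matter.
  Matrices are functions nat => nat => int with 0-based indices.\<close>

definition IAP :: "nat \<Rightarrow> (nat \<Rightarrow> int) \<Rightarrow> (nat \<Rightarrow> int) \<Rightarrow> int \<Rightarrow> int" where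
  "IAP k A D j = A (nat (j mod int k)) + (j div int k) * D (nat (j mod int k))"

fun orbit :: "(int \<Rightarrow> int) \<Rightarrow> nat \<Rightarrow> int \<Rightarrow> int" where
  "orbit u 0 j = u j"
| "orbit u (Suc i) j = - orbit u i j - orbit u i (j + 1)"

definition orbit_periodic :: "nat \<Rightarrow> (int \<Rightarrow> int) \<Rightarrow> nat \<Rightarrow> nat \<Rightarrow> bool" where
  "orbit_periodic m u p q \<longleftrightarrow>
     (\<forall>i j. [orbit u (i + q) j = orbit u i j] (mod int m)
          \<and> [orbit u i (j + int p) = orbit u i j] (mod int m))"

definition binomz :: "nat \<Rightarrow> int \<Rightarrow> int" where
  "binomz i b = (if 0 \<le> b \<and> b \<le> int i then int (i choose nat b) else 0)"

definition Cmat :: "nat \<Rightarrow> nat \<Rightarrow> nat \<Rightarrow> nat \<Rightarrow> int" where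
  "Cmat k i r s = (\<Sum>\<alpha> \<in> {\<alpha>::int. 0 \<le> \<alpha> * int k + int r - int s \<and> \<alpha> * int k + int r - int s \<le> int i}.
                     binomz i (\<alpha> * int k + int r - int s))"

definition Tmat :: "nat \<Rightarrow> nat \<Rightarrow> nat \<Rightarrow> nat \<Rightarrow> int" where
  "Tmat k i r s = (\<Sum>\<alpha> \<in> {\<alpha>::int. 0 \<le> \<alpha> * int k + int r - int s \<and> \<alpha> * int k + int r - int s \<le> int i}.
                     \<alpha> * binomz i (\<alpha> * int k + int r - int s))"

definition Wmat :: "nat \<Rightarrow> nat \<Rightarrow> nat \<Rightarrow> nat \<Rightarrow> int" where
  "Wmat k p2 r s = Cmat k p2 r s + (-1) ^ (p2 + 1) * (if r = s then 1 else 0)"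

definition Pmat :: "nat \<Rightarrow> nat \<Rightarrow> nat \<Rightarrow> nat \<Rightarrow> int" where
  "Pmat k p2 r s =
     (if r < k \<and> s < k then Wmat k p2 r s
      else if r < k then 0
      else if s < k then Tmat k p2 (r - k) s
      else Wmat k p2 (r - k) (s - k))"

definition in_Lker :: "nat \<Rightarrow> nat \<Rightarrow> nat \<Rightarrow> (nat \<Rightarrow> nat \<Rightarrow> int) \<Rightarrow> (nat \<Rightarrow> int) \<Rightarrow> bool" where
  "in_Lker m n1 n2 M X \<longleftrightarrow> (\<forall>s < n2. [(\<Sum>r < n1. X r * M r s) = 0] (mod int m))"

definition block_row :: "nat \<Rightarrow> (nat \<Rightarrow> int) \<Rightarrow> (nat \<Rightarrow> int) \<Rightarrow> nat \<Rightarrow> int" where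
  "block_row k A D r = (if r < k then A r else D (r - k))"

end

theory Submission
  imports Defs
begin

(* The orbit is a_{i,j} = (-1)^i * sum_t binomial(i,t) * u_{j+t}; it commutes with translations
   and a_{i+q} is the orbit of the row a_q, so (p1,p2)-periodicity reduces to u_{j+p1} = u_j and
   a_{p2,j} = u_j.  For u = IAP(A,D) and p1 = c k, the first condition says c D = 0 mod m, i.e.
   D = 0 mod m / gcd(c,m).  For the second, write j = Q k + s and group the binomial sum by the
   residue of s + t mod k: then (-1)^p2 (a_{p2,j} - u_j) is the affine function E_s + Q F_s of Q,
   where E_s and F_s are the entries s and k + s of (A|D) P, and an affine function vanishes
   mod m for every Q iff both of its coefficients do. *)

lemma sum_lessThan_add:
  fixes a b :: nat
  shows "(\<Sum>r < a + b. f r) = (\<Sum>r < a. f r) + (\<Sum>r < b. f (a + r))"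
  by (induction b) (simp_all add: add_ac)

lemma sum_choose_Suc:
  fixes f :: "nat \<Rightarrow> int"
  shows "(\<Sum>t\<le>Suc i. int (Suc i choose t) * f t) =
         (\<Sum>t\<le>i. int (i choose t) * f t) + (\<Sum>t\<le>i. int (i choose t) * f (Suc t))"
proof -
  have "(\<Sum>t\<le>i. int (i choose t) * f t) = (\<Sum>t\<le>Suc i. int (i choose t) * f t)"
    by simp
  also have "\<dots> = f 0 + (\<Sum>t\<le>i. int (i choose Suc t) * f (Suc t))"
    unfolding sum.atMost_Suc_shift by (simp del: sum.atMost_Suc)
  finally show ?thesis
    unfolding sum.atMost_Suc_shift by (simp del: sum.atMost_Suc add: sum.distrib algebra_simps)
qed

lemma all_less_double: "(\<forall>s < 2 * (k::nat). P s) \<longleftrightarrow> (\<forall>s < k. P s \<and> P (k + s))"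
  by (metis add_less_cancel_left le_add_diff_inverse mult_2 not_less trans_less_add1)

lemma all_int_by_residue:
  assumes "0 < k"
  shows "(\<forall>j::int. P j) \<longleftrightarrow> (\<forall>r<k. \<forall>Q. P (Q * int k + int r))"
proof (intro iffI allI)
  fix j assume "\<forall>r<k. \<forall>Q. P (Q * int k + int r)"
  moreover have "j = j div int k * int k + int (nat (j mod int k))" and "nat (j mod int k) < k"
    using assms by (simp_all add: nat_less_iff)
  ultimately show "P j" by metis
qed auto

lemma cong_mult_0_iff_cong_div_gcd:
  fixes c m :: nat and d :: int
  assumes "0 < c"
  shows "[int c * d = 0] (mod int m) \<longleftrightarrow> [d = 0] (mod int (m div gcd c m))"
proof -
  define g where "g = gcd c m"
  have "0 < g" using assms by (simp add: g_def)
  have c: "c = g * (c div g)" and m: "m = g * (m div g)" by (simp_all add: g_def)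
  have "coprime (int (m div g)) (int (c div g))"
    using div_gcd_coprime[of c m] assms by (simp add: g_def coprime_commute)
  have "[int c * d = 0] (mod int m) \<longleftrightarrow> int g * int (m div g) dvd int g * (int (c div g) * d)"
    by (subst (1 2) c, subst (1) m) (simp add: cong_0_iff mult.assoc)
  also have "\<dots> \<longleftrightarrow> int (m div g) dvd int (c div g) * d" using \<open>0 < g\<close> by simp
  also have "\<dots> \<longleftrightarrow> int (m div g) dvd d"
    using \<open>coprime (int (m div g)) (int (c div g))\<close> by (rule coprime_dvd_mult_right_iff)
  finally show ?thesis by (simp add: cong_0_iff g_def)
qed

lemma all_cong_affine_0_iff:
  "(\<forall>Q::int. [a + Q * b = 0] (mod n)) \<longleftrightarrow> [a = 0] (mod n) \<and> [b = 0] (mod n)"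
proof
  assume "\<forall>Q. [a + Q * b = 0] (mod n)"
  from this[rule_format, of 0] this[rule_format, of 1]
  show "[a = 0] (mod n) \<and> [b = 0] (mod n)"
    by (metis add.right_neutral add_diff_cancel_left' cong_diff mult_1 mult_zero_left)
qed (metis add.right_neutral cong_add cong_scalar_left mult_zero_right)

lemma orbit_shift: "orbit (\<lambda>j. u (j + p)) i j = orbit u i (j + p)"
  by (induction i arbitrary: j) (simp_all add: algebra_simps)

lemma orbit_add: "orbit u (i + q) j = orbit (orbit u q) i j"
  by (induction i arbitrary: j) simp_all

lemma orbit_cong:
  assumes "\<And>j. [u j = v j] (mod m)"
  shows "[orbit u i j = orbit v i j] (mod m)"
  using assms by (induction i arbitrary: j) (simp_all add: cong_diff cong_minus_minus_iff)

lemma orbit_periodic_iff: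
  "orbit_periodic m u p q \<longleftrightarrow>
     (\<forall>j. [u (j + int p) = u j] (mod int m)) \<and> (\<forall>j. [orbit u q j = u j] (mod int m))"
proof
  assume "orbit_periodic m u p q"
  then show "(\<forall>j. [u (j + int p) = u j] (mod int m)) \<and> (\<forall>j. [orbit u q j = u j] (mod int m))"
    unfolding orbit_periodic_def by (metis add_0 orbit.simps(1))
next
  assume "(\<forall>j. [u (j + int p) = u j] (mod int m)) \<and> (\<forall>j. [orbit u q j = u j] (mod int m))"
  then have "[orbit u i (j + int p) = orbit u i j] (mod int m)"
    and "[orbit u (i + q) j = orbit u i j] (mod int m)" for i j
    by (auto simp: orbit_add simp flip: orbit_shift intro: orbit_cong)
  then show "orbit_periodic m u p q" unfolding orbit_periodic_def by blast
qed

lemma orbit_binomial: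
  "orbit u i j = (-1) ^ i * (\<Sum>t\<le>i. int (i choose t) * u (j + int t))"
proof (induction i arbitrary: j)
  case 0
  then show ?case by simp
next
  case (Suc i)
  have "orbit u (Suc i) j = (-1) ^ Suc i * ((\<Sum>t\<le>i. int (i choose t) * u (j + int t)) +
       (\<Sum>t\<le>i. int (i choose t) * u (j + int (Suc t))))"
    by (simp add: Suc.IH algebra_simps)
  then show ?case
    using sum_choose_Suc[of i "\<lambda>t. u (j + int t)"] by simp
qed

lemma cong_orbit_self_iff:
  "[orbit u q j = u j] (mod m) \<longleftrightarrow>
     [(\<Sum>t\<le>q. int (q choose t) * u (j + int t)) = (-1) ^ q * u j] (mod m)"
proof -
  have sign: "(-1) ^ q * ((-1) ^ q * x) = (x::int)" for x
    by (simp flip: mult.assoc power_mult_distrib)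
  have "[(-1) ^ q * x = y] (mod m) \<longleftrightarrow> [x = (-1) ^ q * y] (mod m)" for x y :: int
    using cong_scalar_left[of "(-1) ^ q * x" y m "(-1) ^ q"]
      cong_scalar_left[of x "(-1) ^ q * y" m "(-1) ^ q"] by (auto simp: sign)
  then show ?thesis
    unfolding orbit_binomial .
qed

lemma IAP_mult_add:
  assumes "0 < k"
  shows "IAP k A D (Q * int k + x) =
           A (nat (x mod int k)) + (Q + x div int k) * D (nat (x mod int k))"
  using assms by (simp add: IAP_def add.commute)

lemma IAP_mult_add_residue:
  assumes "r < k"
  shows "IAP k A D (Q * int k + int r) = A r + Q * D r"
  using assms IAP_mult_add[of k A D Q "int r"] by simp

lemma IAP_period_iff:
  assumes "0 < c"
  shows "(\<forall>j. [IAP k A D (j + int (c * k)) = IAP k A D j] (mod int m)) \<longleftrightarrow>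
           (\<forall>r<k. [D r = 0] (mod int (m div gcd c m)))"
proof (cases "k = 0")
  case False
  then have "0 < k" by simp
  have "[IAP k A D (Q * int k + int r + int (c * k)) = IAP k A D (Q * int k + int r)] (mod int m)
          \<longleftrightarrow> [int c * D r = 0] (mod int m)"
    if "r < k" for Q r
  proof -
    have shift: "Q * int k + int r + int (c * k) = (Q + int c) * int k + int r"
      by (simp add: algebra_simps)
    have "IAP k A D (Q * int k + int r + int (c * k)) - IAP k A D (Q * int k + int r) =
            int c * D r"
      unfolding shift IAP_mult_add_residue[OF that] by (simp add: algebra_simps)
    then show ?thesis
      using cong_diff_iff_cong_0[of "IAP k A D (Q * int k + int r + int (c * k))"
          "IAP k A D (Q * int k + int r)" "int m"] by simp
  qed
  then show ?thesis
    using all_int_by_residue[OF \<open>0 < k\<close>,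
        of "\<lambda>j. [IAP k A D (j + int (c * k)) = IAP k A D j] (mod int m)"]
    by (simp add: cong_mult_0_iff_cong_div_gcd[OF assms])
qed simp

lemma sum_binomial_residue_class:
  assumes "r < k"
  shows "(\<Sum>t | t \<le> q \<and> nat ((int s + int t) mod int k) = r.
            int (q choose t) * g ((int s + int t) div int k)) =
         (\<Sum>\<alpha> \<in> {\<alpha>. 0 \<le> \<alpha> * int k + int r - int s \<and> \<alpha> * int k + int r - int s \<le> int q}.
            binomz q (\<alpha> * int k + int r - int s) * g \<alpha>)"
proof (rule sum.reindex_bij_witness[where i = "\<lambda>\<alpha>. nat (\<alpha> * int k + int r - int s)"
      and j = "\<lambda>t. (int s + int t) div int k"])
  fix t assume "t \<in> {t. t \<le> q \<and> nat ((int s + int t) mod int k) = r}"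
  then have "t \<le> q" and "(int s + int t) mod int k = int r"
    using assms by auto
  then have t: "(int s + int t) div int k * int k + int r - int s = int t"
    using div_mult_mod_eq[of "int s + int t" "int k"] by simp
  show "nat ((int s + int t) div int k * int k + int r - int s) = t"
    unfolding t by simp
  show "(int s + int t) div int k \<in>
          {\<alpha>. 0 \<le> \<alpha> * int k + int r - int s \<and> \<alpha> * int k + int r - int s \<le> int q}"
    unfolding mem_Collect_eq t using \<open>t \<le> q\<close> by simp
  show "binomz q ((int s + int t) div int k * int k + int r - int s) *
          g ((int s + int t) div int k) = int (q choose t) * g ((int s + int t) div int k)"
    unfolding t binomz_def using \<open>t \<le> q\<close> by simp
next
  fix \<alpha> assume "\<alpha> \<in> {\<alpha>. 0 \<le> \<alpha> * int k + int r - int s \<and> \<alpha> * int k + int r - int s \<le> int q}"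
  then have "0 \<le> \<alpha> * int k + int r - int s" and "\<alpha> * int k + int r - int s \<le> int q" by auto
  then have \<alpha>: "int s + int (nat (\<alpha> * int k + int r - int s)) = \<alpha> * int k + int r" by simp
  show "(int s + int (nat (\<alpha> * int k + int r - int s))) div int k = \<alpha>"
    unfolding \<alpha> using assms by simp
  show "nat (\<alpha> * int k + int r - int s) \<in> {t. t \<le> q \<and> nat ((int s + int t) mod int k) = r}"
    unfolding mem_Collect_eq \<alpha> using assms \<open>\<alpha> * int k + int r - int s \<le> int q\<close> by simp
qed

lemma Cmat_Tmat_affine:
  "Cmat k q r s * (a + Q * d) + Tmat k q r s * d =
     (\<Sum>\<alpha> \<in> {\<alpha>. 0 \<le> \<alpha> * int k + int r - int s \<and> \<alpha> * int k + int r - int s \<le> int q}.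
        binomz q (\<alpha> * int k + int r - int s) * (a + (Q + \<alpha>) * d))"
  unfolding Cmat_def Tmat_def sum_distrib_right sum.distrib[symmetric]
  by (rule sum.cong) (auto simp: algebra_simps)

lemma sum_binomial_IAP:
  assumes "0 < k" and "s < k"
  shows "(\<Sum>t\<le>q. int (q choose t) * IAP k A D (Q * int k + int s + int t)) =
           (\<Sum>r<k. Cmat k q r s * (A r + Q * D r) + Tmat k q r s * D r)"
proof -
  define res where "res t = nat ((int s + int t) mod int k)" for t
  define g where "g t = int (q choose t) * IAP k A D (Q * int k + int s + int t)" for t
  have "(\<Sum>t\<le>q. g t) = (\<Sum>r<k. \<Sum>t | t \<in> {..q} \<and> res t = r. g t)"
    by (rule sum.group[symmetric]) (use assms in \<open>auto simp: res_def nat_less_iff\<close>)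
  also have "\<dots> = (\<Sum>r<k. Cmat k q r s * (A r + Q * D r) + Tmat k q r s * D r)"
  proof (rule sum.cong[OF refl])
    fix r assume "r \<in> {..<k}"
    then have "r < k" by simp
    have "(\<Sum>t | t \<in> {..q} \<and> res t = r. g t) =
            (\<Sum>t | t \<le> q \<and> nat ((int s + int t) mod int k) = r.
               int (q choose t) * (A r + (Q + (int s + int t) div int k) * D r))"
      using IAP_mult_add[OF \<open>0 < k\<close>, of A D Q]
      by (intro sum.cong) (auto simp: g_def res_def add.assoc)
    also have "\<dots> = (\<Sum>\<alpha> \<in> {\<alpha>. 0 \<le> \<alpha> * int k + int r - int s \<and>
                                  \<alpha> * int k + int r - int s \<le> int q}.
                      binomz q (\<alpha> * int k + int r - int s) * (A r + (Q + \<alpha>) * D r))"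
      by (rule sum_binomial_residue_class[OF \<open>r < k\<close>])
    also have "\<dots> = Cmat k q r s * (A r + Q * D r) + Tmat k q r s * D r"
      by (rule Cmat_Tmat_affine[symmetric])
    finally show "(\<Sum>t | t \<in> {..q} \<and> res t = r. g t) =
                    Cmat k q r s * (A r + Q * D r) + Tmat k q r s * D r" .
  qed
  finally show ?thesis by (simp add: g_def)
qed

lemma sum_mult_Wmat:
  assumes "s < k"
  shows "(\<Sum>r<k. f r * Wmat k q r s) = (\<Sum>r<k. f r * Cmat k q r s) - (-1) ^ q * f s"
  using assms by (simp add: Wmat_def distrib_left sum.distrib if_distrib[of "(*) _"] sum.delta)

lemma block_row_Pmat_column:
  assumes "s < k"
  shows "(\<Sum>r < 2 * k. block_row k A D r * Pmat k q r s) =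
           (\<Sum>r<k. A r * Wmat k q r s) + (\<Sum>r<k. D r * Tmat k q r s)"
    and "(\<Sum>r < 2 * k. block_row k A D r * Pmat k q r (k + s)) = (\<Sum>r<k. D r * Wmat k q r s)"
  using assms by (simp_all add: mult_2 sum_lessThan_add block_row_def Pmat_def)

lemma sum_binomial_IAP_residual:
  assumes "0 < k" and "s < k"
  shows "(\<Sum>t\<le>q. int (q choose t) * IAP k A D (Q * int k + int s + int t))
             - (-1) ^ q * IAP k A D (Q * int k + int s) =
           (\<Sum>r < 2 * k. block_row k A D r * Pmat k q r s)
             + Q * (\<Sum>r < 2 * k. block_row k A D r * Pmat k q r (k + s))"
  unfolding sum_binomial_IAP[OF assms] IAP_mult_add_residue[OF \<open>s < k\<close>]
    block_row_Pmat_column[OF \<open>s < k\<close>] sum_mult_Wmat[OF \<open>s < k\<close>]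
  by (simp add: sum.distrib sum_distrib_left algebra_simps)

lemma IAP_orbit_row_cong_iff_in_Lker:
  assumes "0 < k"
  shows "(\<forall>j. [orbit (IAP k A D) q j = IAP k A D j] (mod int m)) \<longleftrightarrow>
           in_Lker m (2 * k) (2 * k) (Pmat k q) (block_row k A D)"
proof -
  define col where "col s = (\<Sum>r < 2 * k. block_row k A D r * Pmat k q r s)" for s
  have "[orbit (IAP k A D) q (Q * int k + int s) = IAP k A D (Q * int k + int s)] (mod int m)
          \<longleftrightarrow> [col s + Q * col (k + s) = 0] (mod int m)" if "s < k" for Q s
  proof -
    have "[orbit (IAP k A D) q (Q * int k + int s) = IAP k A D (Q * int k + int s)] (mod int m)
          \<longleftrightarrow> [(\<Sum>t\<le>q. int (q choose t) * IAP k A D (Q * int k + int s + int t))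
                 - (-1) ^ q * IAP k A D (Q * int k + int s) = 0] (mod int m)"
      unfolding cong_orbit_self_iff by (rule cong_diff_iff_cong_0[symmetric])
    then show ?thesis
      unfolding sum_binomial_IAP_residual[OF assms that] col_def .
  qed
  then have "(\<forall>j. [orbit (IAP k A D) q j = IAP k A D j] (mod int m)) \<longleftrightarrow>
               (\<forall>s<k. \<forall>Q. [col s + Q * col (k + s) = 0] (mod int m))"
    using all_int_by_residue[OF assms,
        of "\<lambda>j. [orbit (IAP k A D) q j = IAP k A D j] (mod int m)"]
    by simp
  also have "\<dots> \<longleftrightarrow> (\<forall>s<k. [col s = 0] (mod int m) \<and> [col (k + s) = 0] (mod int m))"
    by (simp add: all_cong_affine_0_iff)
  also have "\<dots> \<longleftrightarrow> in_Lker m (2 * k) (2 * k) (Pmat k q) (block_row k A D)"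
    unfolding in_Lker_def all_less_double col_def ..
  finally show ?thesis .
qed

theorem theorem5:
  fixes m k p1 p2 :: nat and A D :: "nat \<Rightarrow> int"
  assumes "0 < p1" and "0 < p2" and "k dvd p1"
  shows "orbit_periodic m (IAP k A D) p1 p2 \<longleftrightarrow>
           ((\<forall>r < k. [D r = 0] (mod int (m div gcd (p1 div k) m)))
            \<and> in_Lker m (2 * k) (2 * k) (Pmat k p2) (block_row k A D))"
proof -
  obtain c where p1: "p1 = c * k"
    using \<open>k dvd p1\<close> by (metis dvdE mult.commute)
  with \<open>0 < p1\<close> have "0 < k" and "0 < c" and "p1 div k = c"
    by simp_all
  then show ?thesis
    unfolding orbit_periodic_iff p1 IAP_period_iff[OF \<open>0 < c\<close>]
      IAP_orbit_row_cong_iff_in_Lker[OF \<open>0 < k\<close>]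
    by simp
qed

end
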